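(* Let $C_{12},C_{13},C_{23}$ be compatible bivariate copulas and let $C_L,C_U$ be defined as below. Define \[ F_U(u_1,u_2,u_3)=\min\{C_{12}(u_1,u_2),\,C_{13}(u_1,u_3),\,C_{23}(u_2,u_3),\,1-u_1-u_2-u_3+C_{12}(u_1,u_2)+C_{13}(u_1,u_3)+C_{23}(u_2,u_3)\}, \] \[ F_L(u_1,u_2,u_3)=\max\{0,\,C_{12}(u_1,u_2)+C_{13}(u_1,u_3)-u_1,\,C_{12}(u_1,u_2)+C_{23}(u_2,u_3)-u_2,\,C_{13}(u_1,u_3)+C_{23}(u_2,u_3)-u_3\}. \] Then for every $\mathbf u\in[0,1]^3$, $C_L(\mathbf u)\ge F_L(\mathbf u)$ and $C_U(\mathbf u)\le F_U(\mathbf u)$.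
   Context: A bivariate copula is a distribution function on $[0,1]^2$ with uniform $[0,1]$ marginals. Bivariate copulas $C_{12},C_{13},C_{23}$ are compatible if there is a distribution function $\widetilde C$ on $[0,1]^3$ with uniform marginals such that $\widetilde C(u_1,u_2,1)=C_{12}(u_1,u_2)$, $\widetilde C(u_1,1,u_3)=C_{13}(u_1,u_3)$, $\widetilde C(1,u_2,u_3)=C_{23}(u_2,u_3)$. Let $C_{ji}(u,v):=C_{ij}(v,u)$ for $i<j$, $W_2(u,v)=\max\{u+v-1,0\}$, $M_2(u,v)=\min\{u,v\}$, and for bivariate copulas $A,B,C$: $(A\ast_{C} B)(x,z)=\int_{0}^{1} C(\tfrac{\partial}{\partial t} A(x,t),\tfrac{\partial}{\partial t} B(t,z))\, dt$, $(A\star_{C} B)(x,y,z)=\int_{0}^{y} C(\tfrac{\partial}{\partial t} A(x,t),\tfrac{\partial}{\partial t} B(t,z))\, dt$ (partial derivatives a.e.). With $\mathcal P=\{(1,2,3),(1,3,2),(2,1,3)\}$, $C_L(u_1,u_2,u_3)=\max_{(i,j,k)\in\mathcal P}\max\{(C_{ij}\star_{W_2}C_{jk})(u_i,u_j,u_k),\ (C_{ij}\star_{M_2}C_{jk})(u_i,u_j,u_k)+C_{ik}(u_i,u_k)-(C_{ij}\ast_{M_2}C_{jk})(u_i,u_k)\}$ and $C_U(u_1,u_2,u_3)=\min_{(i,j,k)\in\mathcal P}\min\{(C_{ij}\star_{M_2}C_{jk})(u_i,u_j,u_k),\ (C_{ij}\star_{W_2}C_{jk})(u_i,u_j,u_k)+C_{ik}(u_i,u_k)-(C_{ij}\ast_{W_2}C_{jk})(u_i,u_k)\}$.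 *)

theory Defs
  imports "HOL-Analysis.Analysis"
begin

text \<open>Bivariate copula: a distribution function on the unit square with uniform
  marginals (grounded, uniform margins, 2-increasing on the unit square).
  Values outside the unit square are irrelevant.\<close>
definition copula2 :: "(real \<Rightarrow> real \<Rightarrow> real) \<Rightarrow> bool" where
  "copula2 C \<longleftrightarrow>
     (\<forall>u\<in>{0..1}. C u 0 = 0 \<and> C 0 u = 0 \<and> C u 1 = u \<and> C 1 u = u) \<and>
     (\<forall>u1\<in>{0..1}. \<forall>u2\<in>{0..1}. \<forall>v1\<in>{0..1}. \<forall>v2\<in>{0..1}.
        u1 \<le> u2 \<longrightarrow> v1 \<le> v2 \<longrightarrow> C u2 v2 - C u2 v1 - C u1 v2 + C u1 v1 \<ge> 0)"

definition copula3 :: "(real \<Rightarrow> real \<Rightarrow> real \<Rightarrow> real) \<Rightarrow> bool" where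
  "copula3 C \<longleftrightarrow>
     (\<forall>u\<in>{0..1}. \<forall>v\<in>{0..1}. C 0 u v = 0 \<and> C u 0 v = 0 \<and> C u v 0 = 0) \<and>
     (\<forall>u\<in>{0..1}. C u 1 1 = u \<and> C 1 u 1 = u \<and> C 1 1 u = u) \<and>
     (\<forall>a1\<in>{0..1}. \<forall>b1\<in>{0..1}. \<forall>a2\<in>{0..1}. \<forall>b2\<in>{0..1}. \<forall>a3\<in>{0..1}. \<forall>b3\<in>{0..1}.
        a1 \<le> b1 \<longrightarrow> a2 \<le> b2 \<longrightarrow> a3 \<le> b3 \<longrightarrow>
        C b1 b2 b3 - C a1 b2 b3 - C b1 a2 b3 - C b1 b2 a3
          + C a1 a2 b3 + C a1 b2 a3 + C b1 a2 a3 - C a1 a2 a3 \<ge> 0)"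

definition compatible ::
  "(real \<Rightarrow> real \<Rightarrow> real) \<Rightarrow> (real \<Rightarrow> real \<Rightarrow> real) \<Rightarrow> (real \<Rightarrow> real \<Rightarrow> real) \<Rightarrow> bool" where
  "compatible C12 C13 C23 \<longleftrightarrow>
     copula2 C12 \<and> copula2 C13 \<and> copula2 C23 \<and>
     (\<exists>C. copula3 C \<and>
        (\<forall>u\<in>{0..1}. \<forall>v\<in>{0..1}. C u v 1 = C12 u v \<and> C u 1 v = C13 u v \<and> C 1 u v = C23 u v))"

definition W2 :: "real \<Rightarrow> real \<Rightarrow> real" where
  "W2 u v = max (u + v - 1) 0"

definition M2 :: "real \<Rightarrow> real \<Rightarrow> real" where
  "M2 u v = min u v"

text \<open>\<open>(A \<star>_C B)(x,y,z) = \<integral>_0^y C(\<partial>_t A(x,t), \<partial>_t B(t,z)) dt\<close>; the partial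
  derivatives exist a.e., and values on null sets do not affect the
  (Henstock-Kurzweil = Lebesgue) integral.\<close>
definition star3 ::
  "(real \<Rightarrow> real \<Rightarrow> real) \<Rightarrow> (real \<Rightarrow> real \<Rightarrow> real) \<Rightarrow> (real \<Rightarrow> real \<Rightarrow> real)
     \<Rightarrow> real \<Rightarrow> real \<Rightarrow> real \<Rightarrow> real" where
  "star3 C A B x y z = integral {0..y} (\<lambda>t. C (deriv (\<lambda>s. A x s) t) (deriv (\<lambda>s. B s z) t))"

definition ast2 ::
  "(real \<Rightarrow> real \<Rightarrow> real) \<Rightarrow> (real \<Rightarrow> real \<Rightarrow> real) \<Rightarrow> (real \<Rightarrow> real \<Rightarrow> real)
     \<Rightarrow> real \<Rightarrow> real \<Rightarrow> real" where
  "ast2 C A B x z = integral {0..1} (\<lambda>t. C (deriv (\<lambda>s. A x s) t) (deriv (\<lambda>s. B s z) t))"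

definition transp2 :: "(real \<Rightarrow> real \<Rightarrow> real) \<Rightarrow> real \<Rightarrow> real \<Rightarrow> real" where
  "transp2 C u v = C v u"

definition termL ::
  "(real \<Rightarrow> real \<Rightarrow> real) \<Rightarrow> (real \<Rightarrow> real \<Rightarrow> real) \<Rightarrow> (real \<Rightarrow> real \<Rightarrow> real)
     \<Rightarrow> real \<Rightarrow> real \<Rightarrow> real \<Rightarrow> real" where
  "termL Cij Cjk Cik ui uj uk =
     max (star3 W2 Cij Cjk ui uj uk)
         (star3 M2 Cij Cjk ui uj uk + Cik ui uk - ast2 M2 Cij Cjk ui uk)"

definition termU ::
  "(real \<Rightarrow> real \<Rightarrow> real) \<Rightarrow> (real \<Rightarrow> real \<Rightarrow> real) \<Rightarrow> (real \<Rightarrow> real \<Rightarrow> real)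
     \<Rightarrow> real \<Rightarrow> real \<Rightarrow> real \<Rightarrow> real" where
  "termU Cij Cjk Cik ui uj uk =
     min (star3 M2 Cij Cjk ui uj uk)
         (star3 W2 Cij Cjk ui uj uk + Cik ui uk - ast2 W2 Cij Cjk ui uk)"

text \<open>P = {(1,2,3),(1,3,2),(2,1,3)}.\<close>
definition CL ::
  "(real \<Rightarrow> real \<Rightarrow> real) \<Rightarrow> (real \<Rightarrow> real \<Rightarrow> real) \<Rightarrow> (real \<Rightarrow> real \<Rightarrow> real)
     \<Rightarrow> real \<Rightarrow> real \<Rightarrow> real \<Rightarrow> real" where
  "CL C12 C13 C23 u1 u2 u3 =
     max (termL C12 C23 C13 u1 u2 u3)
      (max (termL C13 (transp2 C23) C12 u1 u3 u2)
           (termL (transp2 C12) C13 C23 u2 u1 u3))"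

definition CU ::
  "(real \<Rightarrow> real \<Rightarrow> real) \<Rightarrow> (real \<Rightarrow> real \<Rightarrow> real) \<Rightarrow> (real \<Rightarrow> real \<Rightarrow> real)
     \<Rightarrow> real \<Rightarrow> real \<Rightarrow> real \<Rightarrow> real" where
  "CU C12 C13 C23 u1 u2 u3 =
     min (termU C12 C23 C13 u1 u2 u3)
      (min (termU C13 (transp2 C23) C12 u1 u3 u2)
           (termU (transp2 C12) C13 C23 u2 u1 u3))"

definition FU ::
  "(real \<Rightarrow> real \<Rightarrow> real) \<Rightarrow> (real \<Rightarrow> real \<Rightarrow> real) \<Rightarrow> (real \<Rightarrow> real \<Rightarrow> real)
     \<Rightarrow> real \<Rightarrow> real \<Rightarrow> real \<Rightarrow> real" where
  "FU C12 C13 C23 u1 u2 u3 =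
     min (C12 u1 u2) (min (C13 u1 u3) (min (C23 u2 u3)
       (1 - u1 - u2 - u3 + C12 u1 u2 + C13 u1 u3 + C23 u2 u3)))"

definition FL ::
  "(real \<Rightarrow> real \<Rightarrow> real) \<Rightarrow> (real \<Rightarrow> real \<Rightarrow> real) \<Rightarrow> (real \<Rightarrow> real \<Rightarrow> real)
     \<Rightarrow> real \<Rightarrow> real \<Rightarrow> real \<Rightarrow> real" where
  "FL C12 C13 C23 u1 u2 u3 =
     max 0 (max (C12 u1 u2 + C13 u1 u3 - u1) (max (C12 u1 u2 + C23 u2 u3 - u2)
       (C13 u1 u3 + C23 u2 u3 - u3)))"

end

theory Submission
  imports Defs
begin

text \<open>
  Only the three copula hypotheses are used.

  For a copula \<open>A\<close> and fixed \<open>x\<close>, the slice \<open>s \<mapsto> A x s\<close> is nondecreasing and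
  1-Lipschitz, so it is differentiable almost everywhere and is the integral of its
  derivative. With \<open>a = \<partial>\<^sub>s A(x,s)\<close> and \<open>b = \<partial>\<^sub>s B(s,z)\<close>, the pointwise inequalities
  \<open>W\<^sub>2(a,b) \<ge> a + b - 1\<close>, \<open>W\<^sub>2(a,b) \<ge> 0\<close> and \<open>M\<^sub>2(a,b) \<le> a, b\<close>, integrated over \<open>[0,y]\<close>
  and \<open>[y,1]\<close>, bound \<open>A \<star>\<^sub>W B\<close> from below, \<open>A \<star>\<^sub>M B\<close> from above, and
  \<open>A \<ast>\<^sub>W B - A \<star>\<^sub>W B\<close> from below by expressions in \<open>A(x,y)\<close> and \<open>B(y,z)\<close>. Applied to the
  three index triples in \<open>\<P>\<close>, these are exactly the terms of \<open>F\<^sub>L\<close> and \<open>F\<^sub>U\<close>.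

  Almost everywhere differentiability of monotone Lipschitz functions is Lebesgue's
  theorem, proved here by the classical Vitali covering argument: if the set \<open>E\<close> where
  a left difference quotient is frequently below \<open>p\<close> and a right one frequently above
  \<open>q > p\<close> had positive outer measure \<open>s\<close>, covering it by small intervals on which \<open>F\<close>
  grows slowly, and those again by intervals on which \<open>F\<close> grows fast, would give
  \<open>q s \<le> p s\<close>.
\<close>

section \<open>Dini gaps of monotone functions are negligible\<close>

definition dini_gap :: "(real \<Rightarrow> real) \<Rightarrow> real filter \<Rightarrow> real filter \<Rightarrow> real \<Rightarrow> real \<Rightarrow> real set" where
  "dini_gap F L R p q =
     {x. (\<exists>\<^sub>F h in L. (F (x + h) - F x) / h < p) \<and> (\<exists>\<^sub>F h in R. (F (x + h) - F x) / h > q)}"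

lemma left_slope_lt_imp_small_cball:
  fixes F :: "real \<Rightarrow> real"
  assumes freq: "\<exists>\<^sub>F h in at_left 0. (F (x + h) - F x) / h < p"
    and U: "open U" "x \<in> U" and d: "0 < d"
  shows "\<exists>c r. 0 < r \<and> r < d \<and> x \<in> cball c r \<and> cball c r \<subseteq> U \<and> F (c + r) - F (c - r) \<le> p * (2 * r)"
proof -
  obtain e where e: "e > 0" "ball x e \<subseteq> U" using U by (meson openE)
  have "\<forall>\<^sub>F h in at_left (0::real). h \<in> {-min e (2 * d)<..<0}"
    using e d by (intro eventually_at_left_real) auto
  with freq obtain h where h: "(F (x + h) - F x) / h < p" "h \<in> {-min e (2 * d)<..<0}"
    using frequently_eventually_conj frequently_ex by blast
  have "F x - F (x + h) \<le> p * (- h)" using h by (auto simp: field_simps)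
  moreover have "cball (x + h/2) (- h/2) \<subseteq> ball x e"
    using h by (auto simp: cball_eq_atLeastAtMost ball_eq_greaterThanLessThan)
  ultimately show ?thesis
    using h e by (intro conjI exI[of _ "x + h/2", OF exI[of _ "- h/2"]]) (auto simp: cball_eq_atLeastAtMost add.commute)
qed

lemma right_slope_gt_imp_small_cball:
  fixes F :: "real \<Rightarrow> real"
  assumes freq: "\<exists>\<^sub>F h in at_right 0. (F (x + h) - F x) / h > q"
    and U: "open U" "x \<in> U" and d: "0 < d"
  shows "\<exists>c r. 0 < r \<and> r < d \<and> x \<in> cball c r \<and> cball c r \<subseteq> U \<and> q * (2 * r) \<le> F (c + r) - F (c - r)"
proof -
  obtain e where e: "e > 0" "ball x e \<subseteq> U" using U by (meson openE)
  have "\<forall>\<^sub>F h in at_right (0::real). h \<in> {0<..<min e (2 * d)}"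
    using e d by (intro eventually_at_right_real) auto
  with freq obtain h where h: "(F (x + h) - F x) / h > q" "h \<in> {0<..<min e (2 * d)}"
    using frequently_eventually_conj frequently_ex by blast
  have "q * h \<le> F (x + h) - F x" using h by (auto simp: field_simps)
  moreover have "cball (x + h/2) (h/2) \<subseteq> ball x e"
    using h by (auto simp: cball_eq_atLeastAtMost ball_eq_greaterThanLessThan)
  ultimately show ?thesis
    using h e by (intro conjI exI[of _ "x + h/2", OF exI[of _ "h/2"]]) (auto simp: cball_eq_atLeastAtMost add.commute)
qed

lemma Vitali_covering_cballs_disjoint_family:
  fixes S :: "'a::euclidean_space set"
  assumes "\<And>x d. x \<in> S \<Longrightarrow> 0 < d \<Longrightarrow> \<exists>c r. 0 < r \<and> r < d \<and> x \<in> cball c r \<and> P c r"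
  obtains C where "countable C" "\<And>c r. (c, r) \<in> C \<Longrightarrow> 0 < r \<and> P c r"
    "disjoint_family_on (\<lambda>(c, r). cball c r) C" "negligible (S - (\<Union>(c, r)\<in>C. cball c r))"
proof -
  let ?K = "{(c, r). 0 < r \<and> P c r}"
  obtain C where C: "countable C" "C \<subseteq> ?K"
      "pairwise (\<lambda>i j. disjnt (cball (fst i) (snd i)) (cball (fst j) (snd j))) C"
      "negligible (S - (\<Union>i\<in>C. cball (fst i) (snd i)))"
    by (rule Vitali_covering_theorem_cballs[of ?K snd S fst]) (use assms in fastforce)+
  show ?thesis
    by (rule that[OF C(1)]) (use C(2-4) in \<open>auto simp: disjoint_family_on_def pairwise_def disjnt_def split_beta\<close>)
qed

lemma negligible_diff_UN_balls:
  fixes S :: "'a::euclidean_space set"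
  assumes "countable C" "negligible (S - (\<Union>(c, r)\<in>C. cball c r))"
  shows "negligible (S - (\<Union>(c, r)\<in>C. ball c r))"
proof (rule negligible_subset)
  show "negligible ((S - (\<Union>(c, r)\<in>C. cball c r)) \<union> (\<Union>(c, r)\<in>C. sphere c r))"
    using assms by (intro negligible_Un negligible_countable_Union) (auto intro: negligible_sphere)
  show "S - (\<Union>(c, r)\<in>C. ball c r) \<subseteq> (S - (\<Union>(c, r)\<in>C. cball c r)) \<union> (\<Union>(c, r)\<in>C. sphere c r)"
  proof
    fix x assume x: "x \<in> S - (\<Union>(c, r)\<in>C. ball c r)"
    show "x \<in> (S - (\<Union>(c, r)\<in>C. cball c r)) \<union> (\<Union>(c, r)\<in>C. sphere c r)"
    proof (cases "x \<in> (\<Union>(c, r)\<in>C. cball c r)")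
      case True
      then obtain c r where cr: "(c, r) \<in> C" "x \<in> cball c r" by auto
      with x have "x \<in> sphere c r" by auto
      with cr show ?thesis by (intro UnI2 UN_I[of "(c, r)"]) auto
    qed (use x in blast)
  qed
qed

lemma emeasure_UN_countable_cmult_le:
  assumes "countable I" "disjoint_family_on A I"
    and "\<And>i. i \<in> I \<Longrightarrow> A i \<in> sets M" "\<And>i. i \<in> I \<Longrightarrow> A i \<in> sets N"
    and "\<And>i. i \<in> I \<Longrightarrow> c * emeasure M (A i) \<le> d * emeasure N (A i)"
  shows "c * emeasure M (\<Union>i\<in>I. A i) \<le> d * emeasure N (\<Union>i\<in>I. A i)"
proof -
  have "c * emeasure M (\<Union>i\<in>I. A i) = (\<integral>\<^sup>+i. c * emeasure M (A i) \<partial>count_space I)"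
    by (simp add: emeasure_UN_countable assms nn_integral_cmult)
  also have "\<dots> \<le> (\<integral>\<^sup>+i. d * emeasure N (A i) \<partial>count_space I)"
    by (intro nn_integral_mono) (simp add: assms)
  also have "\<dots> = d * emeasure N (\<Union>i\<in>I. A i)"
    by (simp add: emeasure_UN_countable assms nn_integral_cmult)
  finally show ?thesis .
qed

lemma emeasure_interval_measure_ball_cball:
  fixes F :: "real \<Rightarrow> real"
  assumes "mono F" "continuous_on UNIV F" "0 \<le> r"
  shows "emeasure (interval_measure F) (ball c r) \<le> ennreal (F (c + r) - F (c - r))"
    and "ennreal (F (c + r) - F (c - r)) \<le> emeasure (interval_measure F) (cball c r)"
proof -
  have Ioc: "emeasure (interval_measure F) {c - r<..c + r} = ennreal (F (c + r) - F (c - r))"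
    using assms by (intro emeasure_interval_measure_Ioc)
      (auto simp: monoD continuous_on_eq_continuous_within continuous_at_imp_continuous_at_within)
  show "emeasure (interval_measure F) (ball c r) \<le> ennreal (F (c + r) - F (c - r))"
    unfolding Ioc[symmetric] by (intro emeasure_mono) (auto simp: ball_eq_greaterThanLessThan)
  show "ennreal (F (c + r) - F (c - r)) \<le> emeasure (interval_measure F) (cball c r)"
    unfolding Ioc[symmetric] by (intro emeasure_mono) (auto simp: cball_eq_atLeastAtMost add.commute)
qed

lemma left_dini_cover:
  fixes F :: "real \<Rightarrow> real"
  assumes F: "mono F" "continuous_on UNIV F" and "0 \<le> p"
    and E: "\<And>x. x \<in> E \<Longrightarrow> \<exists>\<^sub>F h in at_left 0. (F (x + h) - F x) / h < p"
    and U: "open U" "E \<subseteq> U"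
  obtains V where "open V" "V \<subseteq> U" "negligible (E - V)"
    "emeasure (interval_measure F) V \<le> ennreal p * emeasure lebesgue U"
proof -
  have cover: "\<exists>c r. 0 < r \<and> r < d \<and> x \<in> cball c r \<and> cball c r \<subseteq> U \<and> F (c + r) - F (c - r) \<le> p * (2 * r)"
    if "x \<in> E" "0 < d" for x d
    using E U that by (intro left_slope_lt_imp_small_cball) auto
  obtain C where C: "countable C"
      "\<And>c r. (c, r) \<in> C \<Longrightarrow> 0 < r \<and> cball c r \<subseteq> U \<and> F (c + r) - F (c - r) \<le> p * (2 * r)"
      "disjoint_family_on (\<lambda>(c, r). cball c r) C" "negligible (E - (\<Union>(c, r)\<in>C. cball c r))"
    using Vitali_covering_cballs_disjoint_family[OF cover] by blast
  define V where "V = (\<Union>(c, r)\<in>C. ball c r)"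
  have "V \<subseteq> U" using C(2) by (fastforce simp: V_def)
  have "negligible (E - V)" unfolding V_def by (rule negligible_diff_UN_balls[OF C(1,4)])
  have disjoint_balls: "disjoint_family_on (\<lambda>(c, r). ball c r) C"
    by (rule disjoint_family_on_bisimulation[OF C(3)]) (auto dest: ball_subset_cball[THEN subsetD])
  have "1 * emeasure (interval_measure F) V \<le> ennreal p * emeasure lebesgue V"
    unfolding V_def
  proof (rule emeasure_UN_countable_cmult_le[OF C(1) disjoint_balls], goal_cases)
    case (3 i)
    obtain c r where i: "i = (c, r)" by fastforce
    with C(2) 3 have "0 < r" "F (c + r) - F (c - r) \<le> p * (2 * r)" by auto
    then show ?case
      using emeasure_interval_measure_ball_cball(1)[OF F, of r c] \<open>0 \<le> p\<close>
      by (simp add: i ball_eq_greaterThanLessThan ennreal_mult[symmetric] order.trans[OF _ ennreal_leI])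
  qed auto
  also have "\<dots> \<le> ennreal p * emeasure lebesgue U"
    using \<open>V \<subseteq> U\<close> U(1) by (intro mult_left_mono emeasure_mono) auto
  finally show ?thesis
    using \<open>V \<subseteq> U\<close> \<open>negligible (E - V)\<close> by (intro that) (auto simp: V_def)
qed

lemma right_dini_cover:
  fixes F :: "real \<Rightarrow> real"
  assumes F: "mono F" "continuous_on UNIV F" and "0 \<le> q"
    and E: "\<And>x. x \<in> E \<Longrightarrow> \<exists>\<^sub>F h in at_right 0. (F (x + h) - F x) / h > q"
    and V: "open V" "E \<subseteq> V"
  obtains W where "W \<in> sets borel" "W \<subseteq> V" "negligible (E - W)"
    "ennreal q * emeasure lebesgue W \<le> emeasure (interval_measure F) W"
proof -
  have cover: "\<exists>c r. 0 < r \<and> r < d \<and> x \<in> cball c r \<and> cball c r \<subseteq> V \<and> q * (2 * r) \<le> F (c + r) - F (c - r)"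
    if "x \<in> E" "0 < d" for x d
    using E V that by (intro right_slope_gt_imp_small_cball) auto
  obtain C where C: "countable C"
      "\<And>c r. (c, r) \<in> C \<Longrightarrow> 0 < r \<and> cball c r \<subseteq> V \<and> q * (2 * r) \<le> F (c + r) - F (c - r)"
      "disjoint_family_on (\<lambda>(c, r). cball c r) C" "negligible (E - (\<Union>(c, r)\<in>C. cball c r))"
    using Vitali_covering_cballs_disjoint_family[OF cover] by blast
  define W where "W = (\<Union>(c, r)\<in>C. cball c r)"
  have "ennreal q * emeasure lebesgue W \<le> 1 * emeasure (interval_measure F) W"
    unfolding W_def
  proof (rule emeasure_UN_countable_cmult_le[OF C(1,3)], goal_cases)
    case (3 i)
    obtain c r where i: "i = (c, r)" by fastforce
    with C(2) 3 have "0 < r" "q * (2 * r) \<le> F (c + r) - F (c - r)" by auto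
    then show ?case
      using emeasure_interval_measure_ball_cball(2)[OF F, of r c] \<open>0 \<le> q\<close>
      by (simp add: i cball_eq_atLeastAtMost ennreal_mult[symmetric] order.trans[OF ennreal_leI])
  qed auto
  moreover have "W \<subseteq> V" using C(2) by (fastforce simp: W_def)
  moreover have "W \<in> sets borel" using C(1) by (auto simp: W_def)
  ultimately show ?thesis using C(4) by (intro that) (auto simp: W_def)
qed

lemma dini_gap_cover:
  fixes F :: "real \<Rightarrow> real"
  assumes F: "mono F" "continuous_on UNIV F" and pq: "0 \<le> p" "0 \<le> q"
    and E: "E \<subseteq> dini_gap F (at_left 0) (at_right 0) p q" and U: "open U" "E \<subseteq> U"
  obtains W where "W \<in> sets lebesgue" "E \<subseteq> W"
    "ennreal q * emeasure lebesgue W \<le> ennreal p * emeasure lebesgue U"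
proof -
  obtain V where V: "open V" "negligible (E - V)"
      "emeasure (interval_measure F) V \<le> ennreal p * emeasure lebesgue U"
    by (rule left_dini_cover[OF F pq(1) _ U]) (use E in \<open>auto simp: dini_gap_def\<close>)
  obtain W where W: "W \<in> sets borel" "W \<subseteq> V" "negligible (E \<inter> V - W)"
      "ennreal q * emeasure lebesgue W \<le> emeasure (interval_measure F) W"
    by (rule right_dini_cover[where E = "E \<inter> V", OF F pq(2) _ V(1)]) (use E in \<open>auto simp: dini_gap_def\<close>)
  let ?N = "(E \<inter> V - W) \<union> (E - V)"
  have "?N \<in> null_sets lebesgue" using V(2) W(3) by (simp add: negligible_iff_null_sets[symmetric])
  then have "ennreal q * emeasure lebesgue (W \<union> ?N) = ennreal q * emeasure lebesgue W"
    using W(1) by (simp add: emeasure_Un_null_set)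
  also have "\<dots> \<le> emeasure (interval_measure F) W" by (rule W(4))
  also have "\<dots> \<le> emeasure (interval_measure F) V"
    using W(2) V(1) by (intro emeasure_mono) auto
  also have "\<dots> \<le> ennreal p * emeasure lebesgue U" by (rule V(3))
  finally show ?thesis
    using W(1) \<open>?N \<in> null_sets lebesgue\<close> by (intro that[of "W \<union> ?N"]) auto
qed

lemma INF_open_covers_le_emeasure:
  fixes E W B :: "'a::euclidean_space set"
  assumes "open B" "W \<in> sets lebesgue" "E \<subseteq> W" "E \<subseteq> B"
  shows "(INF U\<in>{U. open U \<and> E \<subseteq> U \<and> U \<subseteq> B}. emeasure lebesgue U) \<le> emeasure lebesgue W"
proof (rule ennreal_le_epsilon)
  fix \<delta> :: real assume "0 < \<delta>"
  then obtain T where T: "open T" "W \<subseteq> T" "T - W \<in> lmeasurable" "emeasure lebesgue (T - W) < \<delta>"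
    using sets_lebesgue_outer_open[OF assms(2)] by metis
  have "(INF U\<in>{U. open U \<and> E \<subseteq> U \<and> U \<subseteq> B}. emeasure lebesgue U) \<le> emeasure lebesgue (T \<inter> B)"
    using assms T by (intro INF_lower) auto
  also have "\<dots> \<le> emeasure lebesgue (W \<union> (T - W))"
    using assms T by (intro emeasure_mono) auto
  also have "\<dots> \<le> emeasure lebesgue W + emeasure lebesgue (T - W)"
    using assms T by (intro emeasure_subadditive) auto
  also have "\<dots> \<le> emeasure lebesgue W + \<delta>"
    using T(4) by (intro add_left_mono) simp
  finally show "(INF U\<in>{U. open U \<and> E \<subseteq> U \<and> U \<subseteq> B}. emeasure lebesgue U) \<le> emeasure lebesgue W + \<delta>" .
qed

lemma negligible_if_covers_shrink:
  fixes E B :: "'a::euclidean_space set" and p q :: real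
  assumes B: "open B" "bounded B" "E \<subseteq> B" and pq: "0 \<le> p" "p < q"
    and shrink: "\<And>U. open U \<Longrightarrow> E \<subseteq> U \<Longrightarrow> U \<subseteq> B \<Longrightarrow> \<exists>W\<in>sets lebesgue. E \<subseteq> W \<and>
       ennreal q * emeasure lebesgue W \<le> ennreal p * emeasure lebesgue U"
  shows "negligible E"
proof -
  define \<U> where "\<U> = {U. open U \<and> E \<subseteq> U \<and> U \<subseteq> B}"
  define s where "s = (INF U\<in>\<U>. emeasure lebesgue U)"
  have "s \<le> emeasure lebesgue B" unfolding s_def using B by (intro INF_lower) (auto simp: \<U>_def)
  also have "\<dots> < \<infinity>" using lmeasurable_open[OF B(2,1)] unfolding fmeasurable_def by blast
  finally obtain r where r: "s = ennreal r" "0 \<le> r" by (cases s rule: ennreal_cases) auto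
  have approx: "q * r \<le> p * (r + \<epsilon>)" if "0 < \<epsilon>" for \<epsilon>
  proof -
    have "s < ennreal (r + \<epsilon>)" using r that by (simp add: ennreal_lessI)
    then obtain U where U: "U \<in> \<U>" "emeasure lebesgue U < ennreal (r + \<epsilon>)"
      unfolding s_def by (auto simp: INF_less_iff)
    then obtain W where W: "W \<in> sets lebesgue" "E \<subseteq> W"
        "ennreal q * emeasure lebesgue W \<le> ennreal p * emeasure lebesgue U"
      using shrink[of U] unfolding \<U>_def by blast
    have "ennreal (q * r) = ennreal q * s" using r pq by (simp add: ennreal_mult)
    also have "\<dots> \<le> ennreal q * emeasure lebesgue W"
      unfolding s_def \<U>_def using W B by (intro mult_left_mono INF_open_covers_le_emeasure) auto
    also have "\<dots> \<le> ennreal p * emeasure lebesgue U" by (rule W(3))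
    also have "\<dots> \<le> ennreal p * ennreal (r + \<epsilon>)" using U(2) by (intro mult_left_mono) auto
    also have "\<dots> = ennreal (p * (r + \<epsilon>))" using pq r that by (simp add: ennreal_mult)
    finally show ?thesis using pq r that by (simp add: ennreal_le_iff)
  qed
  have "q * r \<le> p * r + e" if "0 < e" for e
  proof -
    have "q * r \<le> p * (r + e / (p + 1))" using that pq by (intro approx) simp
    also have "\<dots> \<le> p * r + e" using that pq by (simp add: distrib_left field_simps)
    finally show ?thesis .
  qed
  then have "q * r \<le> p * r" by (rule field_le_epsilon)
  with pq r have "s = 0" by (simp add: mult_le_cancel_right)
  show ?thesis
  proof (subst negligible_outer, intro allI impI)
    fix e :: real assume "0 < e"
    with \<open>s = 0\<close> have "s < ennreal e" by simp
    then obtain U where "U \<in> \<U>" "emeasure lebesgue U < ennreal e"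
      unfolding s_def by (auto simp: INF_less_iff)
    moreover have "U \<in> lmeasurable" if "U \<in> \<U>" for U
      using that B by (auto simp: \<U>_def intro: lmeasurable_open bounded_subset)
    ultimately show "\<exists>T. E \<subseteq> T \<and> T \<in> lmeasurable \<and> measure lebesgue T < e"
      by (intro exI[of _ U]) (auto simp: \<U>_def emeasure_eq_measure2 ennreal_less_iff)
  qed
qed

lemma mono_slope_nonneg:
  fixes F :: "real \<Rightarrow> real"
  assumes "mono F"
  shows "0 \<le> (F (x + h) - F x) / h"
proof (cases h "0::real" rule: linorder_cases)
  case less
  then have "F (x + h) \<le> F x" using monoD[OF assms, of "x + h" x] by simp
  with less show ?thesis by (simp add: divide_nonpos_neg)
next
  case greater
  then have "F x \<le> F (x + h)" using monoD[OF assms, of x "x + h"] by simp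
  with greater show ?thesis by (simp add: divide_nonneg_pos)
qed simp

lemma negligible_dini_gap_left_right:
  fixes F :: "real \<Rightarrow> real"
  assumes F: "mono F" "continuous_on UNIV F" and "p < q"
  shows "negligible (dini_gap F (at_left 0) (at_right 0) p q)" (is "negligible ?D")
proof (cases "0 < p")
  case False
  then have "p \<le> (F (x + h) - F x) / h" for x h
    using mono_slope_nonneg[OF F(1), of x h] by linarith
  then have "\<not> (\<exists>\<^sub>F h in at_left 0. (F (x + h) - F x) / h < p)" for x
    by (simp add: not_frequently not_less)
  then show ?thesis by (simp add: dini_gap_def)
next
  case True
  have bounded_part: "negligible (?D \<inter> {-real n<..<real n})" for n
  proof (rule negligible_if_covers_shrink[where B = "{-real n<..<real n}"])
    fix U assume U: "open U" "?D \<inter> {-real n<..<real n} \<subseteq> U"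
    obtain W where "W \<in> sets lebesgue" "?D \<inter> {-real n<..<real n} \<subseteq> W"
        "ennreal q * emeasure lebesgue W \<le> ennreal p * emeasure lebesgue U"
      by (rule dini_gap_cover[OF F, of p q _ U]) (use True \<open>p < q\<close> U in auto)
    then show "\<exists>W\<in>sets lebesgue. ?D \<inter> {-real n<..<real n} \<subseteq> W \<and>
        ennreal q * emeasure lebesgue W \<le> ennreal p * emeasure lebesgue U" by blast
  qed (use True \<open>p < q\<close> in auto)
  have "?D \<subseteq> (\<Union>n. {-real n<..<real n})"
  proof
    fix x obtain n where "\<bar>x\<bar> < real n" using reals_Archimedean2[of "\<bar>x\<bar>"] by blast
    then show "x \<in> (\<Union>n. {-real n<..<real n})" by (intro UN_I[OF UNIV_I]) (auto simp: abs_less_iff)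
  qed
  then have "?D = (\<Union>n. ?D \<inter> {-real n<..<real n})" by blast
  also have "negligible \<dots>"
    using bounded_part by (intro negligible_countable_Union) auto
  finally show ?thesis .
qed

lemma negligible_dini_gap_right_left:
  fixes F :: "real \<Rightarrow> real"
  assumes F: "mono F" "continuous_on UNIV F" and "p < q"
  shows "negligible (dini_gap F (at_right 0) (at_left 0) p q)"
proof -
  define G where "G x = - F (- x)" for x
  have "mono G" using F(1) by (auto simp: G_def mono_def)
  moreover have "continuous_on UNIV G"
    unfolding G_def by (intro continuous_intros continuous_on_compose2[OF F(2)]) auto
  ultimately have "negligible (dini_gap G (at_left 0) (at_right 0) p q)"
    using \<open>p < q\<close> by (rule negligible_dini_gap_left_right)
  then have "negligible (uminus ` dini_gap G (at_left 0) (at_right 0) p q)"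
    by (rule negligible_differentiable_image_negligible[OF order_refl]) (auto intro: differentiable_on_minus differentiable_on_id)
  moreover have "dini_gap F (at_right 0) (at_left 0) p q \<subseteq> uminus ` dini_gap G (at_left 0) (at_right 0) p q"
  proof
    fix x assume "x \<in> dini_gap F (at_right 0) (at_left 0) p q"
    then have right: "\<exists>\<^sub>F h in at_right 0. (F (x + h) - F x) / h < p"
      and left: "\<exists>\<^sub>F h in at_left 0. (F (x + h) - F x) / h > q" by (auto simp: dini_gap_def)
    have slope: "(G (- x + - h) - G (- x)) / - h = (F (x + h) - F x) / h" for h
      by (simp add: G_def minus_divide_left add.commute)
    have "\<exists>\<^sub>F h in at_left 0. (G (- x + h) - G (- x)) / h < p"
      unfolding at_left_minus[of 0] minus_zero frequently_filtermap slope by (rule right)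
    moreover have "\<exists>\<^sub>F h in at_right 0. (G (- x + h) - G (- x)) / h > q"
      unfolding at_right_minus[of 0] minus_zero frequently_filtermap slope by (rule left)
    ultimately have "- x \<in> dini_gap G (at_left 0) (at_right 0) p q" by (simp add: dini_gap_def)
    then show "x \<in> uminus ` dini_gap G (at_left 0) (at_right 0) p q" by force
  qed
  ultimately show ?thesis by (rule negligible_subset)
qed

section \<open>Lebesgue's differentiation theorem for monotone Lipschitz functions\<close>

lemma frequently_at_split_real:
  "(\<exists>\<^sub>F h in at (x::real). P h) \<longleftrightarrow> (\<exists>\<^sub>F h in at_left x. P h) \<or> (\<exists>\<^sub>F h in at_right x. P h)"
  by (simp add: at_eq_sup_left_right frequently_def eventually_sup)

lemma rational_gap_one_sided:
  fixes Q :: "real \<Rightarrow> real"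
  assumes "R \<noteq> bot" "p \<in> \<rat>" "q \<in> \<rat>" "p < q"
    and "\<exists>\<^sub>F h in L. Q h < p" "\<exists>\<^sub>F h in L. Q h > q"
  shows "\<exists>p'\<in>\<rat>. \<exists>q'\<in>\<rat>. p' < q' \<and>
    ((\<exists>\<^sub>F h in L. Q h < p') \<and> (\<exists>\<^sub>F h in R. Q h > q') \<or>
     (\<exists>\<^sub>F h in R. Q h < p') \<and> (\<exists>\<^sub>F h in L. Q h > q'))"
proof -
  obtain m1 where m1: "m1 \<in> \<rat>" "p < m1" "m1 < q" using Rats_dense_in_real[OF \<open>p < q\<close>] by blast
  obtain m2 where m2: "m2 \<in> \<rat>" "m1 < m2" "m2 < q" using Rats_dense_in_real[OF m1(3)] by blast
  show ?thesis
  proof (cases "\<exists>\<^sub>F h in R. Q h > m1")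
    case True
    with assms m1 show ?thesis by blast
  next
    case False
    then have "\<forall>\<^sub>F h in R. Q h < m2" using m2 by (auto simp: not_frequently elim: eventually_mono)
    then have "\<exists>\<^sub>F h in R. Q h < m2" by (rule eventually_frequently[OF \<open>R \<noteq> bot\<close>])
    with assms m2 show ?thesis by blast
  qed
qed

lemma oscillation_imp_rational_dini_gap:
  fixes F :: "real \<Rightarrow> real"
  assumes "p \<in> \<rat>" "q \<in> \<rat>" "p < q"
    and "\<exists>\<^sub>F h in at 0. (F (x + h) - F x) / h < p" "\<exists>\<^sub>F h in at 0. (F (x + h) - F x) / h > q"
  shows "\<exists>p'\<in>\<rat>. \<exists>q'\<in>\<rat>. p' < q' \<and>
    x \<in> dini_gap F (at_left 0) (at_right 0) p' q' \<union> dini_gap F (at_right 0) (at_left 0) p' q'"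
proof -
  let ?Q = "\<lambda>h. (F (x + h) - F x) / h"
  have lower: "(\<exists>\<^sub>F h in at_left 0. ?Q h < p) \<or> (\<exists>\<^sub>F h in at_right 0. ?Q h < p)"
    and upper: "(\<exists>\<^sub>F h in at_left 0. ?Q h > q) \<or> (\<exists>\<^sub>F h in at_right 0. ?Q h > q)"
    using assms(4,5) by (simp_all add: frequently_at_split_real)
  have "\<exists>p'\<in>\<rat>. \<exists>q'\<in>\<rat>. p' < q' \<and>
      ((\<exists>\<^sub>F h in at_left 0. ?Q h < p') \<and> (\<exists>\<^sub>F h in at_right 0. ?Q h > q') \<or>
       (\<exists>\<^sub>F h in at_right 0. ?Q h < p') \<and> (\<exists>\<^sub>F h in at_left 0. ?Q h > q'))"
    using lower upper
  proof (elim disjE)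
    assume "\<exists>\<^sub>F h in at_left 0. ?Q h < p" "\<exists>\<^sub>F h in at_left 0. ?Q h > q"
    then show ?thesis
      using rational_gap_one_sided[where R = "at_right 0" and L = "at_left 0" and Q = ?Q, OF _ assms(1-3)]
      by simp
  next
    assume "\<exists>\<^sub>F h in at_right 0. ?Q h < p" "\<exists>\<^sub>F h in at_right 0. ?Q h > q"
    then show ?thesis
      using rational_gap_one_sided[where R = "at_left 0" and L = "at_right 0" and Q = ?Q, OF _ assms(1-3)]
      by auto
  qed (use assms(1-3) in blast)+
  then show ?thesis by (simp add: dini_gap_def)
qed

lemma tendsto_if_no_rational_gap:
  fixes f :: "'a \<Rightarrow> real"
  assumes "F \<noteq> bot" and bounded: "\<forall>\<^sub>F x in F. lo \<le> f x \<and> f x \<le> hi"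
    and no_gap: "\<And>p q. p \<in> \<rat> \<Longrightarrow> q \<in> \<rat> \<Longrightarrow> p < q \<Longrightarrow>
      (\<exists>\<^sub>F x in F. f x < p) \<Longrightarrow> (\<exists>\<^sub>F x in F. f x > q) \<Longrightarrow> False"
  shows "\<exists>l. (f \<longlongrightarrow> l) F"
proof -
  let ?f = "\<lambda>x. ereal (f x)"
  have "ereal lo \<le> Liminf F ?f"
    by (rule Liminf_bounded) (use bounded in \<open>auto elim: eventually_mono\<close>)
  moreover have "Limsup F ?f \<le> ereal hi"
    by (rule Limsup_bounded) (use bounded in \<open>auto elim: eventually_mono\<close>)
  moreover have "Liminf F ?f \<le> Limsup F ?f" using \<open>F \<noteq> bot\<close> by (rule Liminf_le_Limsup)
  ultimately obtain a b where a: "Liminf F ?f = ereal a" and b: "Limsup F ?f = ereal b" and "a \<le> b"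
    by (cases "Liminf F ?f"; cases "Limsup F ?f") auto
  have "\<not> a < b"
  proof
    assume "a < b"
    then obtain p where p: "p \<in> \<rat>" "a < p" "p < b" using Rats_dense_in_real by blast
    then obtain q where q: "q \<in> \<rat>" "p < q" "q < b" using Rats_dense_in_real by blast
    have "\<exists>\<^sub>F x in F. f x < p"
    proof (rule ccontr)
      assume "\<not> ?thesis"
      then have "\<forall>\<^sub>F x in F. ereal p \<le> ?f x" by (auto simp: not_frequently elim: eventually_mono)
      then have "ereal p \<le> Liminf F ?f" by (rule Liminf_bounded)
      with a p show False by simp
    qed
    moreover have "\<exists>\<^sub>F x in F. f x > q"
    proof (rule ccontr)
      assume "\<not> ?thesis"
      then have "\<forall>\<^sub>F x in F. ?f x \<le> ereal q" by (auto simp: not_frequently elim: eventually_mono)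
      then have "Limsup F ?f \<le> ereal q" by (rule Limsup_bounded)
      with b q show False by simp
    qed
    ultimately show False using no_gap p q by blast
  qed
  with \<open>a \<le> b\<close> have "(?f \<longlongrightarrow> ereal a) F" using a b \<open>F \<noteq> bot\<close> by (intro Liminf_eq_Limsup) auto
  then show ?thesis by auto
qed

lemma lipschitz_slope_bound:
  fixes F :: "real \<Rightarrow> real"
  assumes "L-lipschitz_on UNIV F"
  shows "\<bar>(F (x + h) - F x) / h\<bar> \<le> L"
proof (cases "h = 0")
  case False
  have "\<bar>F (x + h) - F x\<bar> \<le> L * \<bar>h\<bar>"
    using lipschitz_onD[OF assms, of "x + h" x] by (simp add: dist_real_def)
  with False show ?thesis by (simp add: abs_divide divide_le_eq)
qed (use lipschitz_on_nonneg[OF assms] in simp)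

lemma lipschitz_deriv_bound:
  fixes F :: "real \<Rightarrow> real"
  assumes "L-lipschitz_on UNIV F" "(F has_real_derivative D) (at x)"
  shows "\<bar>D\<bar> \<le> L"
proof (rule tendsto_upperbound)
  show "((\<lambda>h. \<bar>(F (x + h) - F x) / h\<bar>) \<longlongrightarrow> \<bar>D\<bar>) (at 0)"
    using assms(2) by (intro tendsto_rabs) (simp add: DERIV_def)
qed (use lipschitz_slope_bound[OF assms(1)] in auto)

lemma mono_lipschitz_differentiable_ae:
  fixes F :: "real \<Rightarrow> real"
  assumes mono: "mono F" and lip: "L-lipschitz_on UNIV F"
  obtains N where "negligible N" "\<And>x. x \<notin> N \<Longrightarrow> (F has_real_derivative deriv F x) (at x)"
proof
  have cont: "continuous_on UNIV F" using lip by (rule lipschitz_on_continuous_on)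
  define I where "I = {(p, q). p \<in> \<rat> \<and> q \<in> \<rat> \<and> p < (q::real)}"
  define N where "N = (\<Union>(p, q)\<in>I. dini_gap F (at_left 0) (at_right 0) p q \<union> dini_gap F (at_right 0) (at_left 0) p q)"
  have "countable I"
    by (rule countable_subset[of _ "\<rat> \<times> \<rat>"]) (auto simp: I_def countable_rat)
  then show "negligible N"
    unfolding N_def I_def using negligible_dini_gap_left_right[OF mono cont] negligible_dini_gap_right_left[OF mono cont]
    by (intro negligible_countable_Union) auto
  fix x assume "x \<notin> N"
  have "\<exists>D. ((\<lambda>h. (F (x + h) - F x) / h) \<longlongrightarrow> D) (at 0)"
  proof (rule tendsto_if_no_rational_gap)
    show "\<forall>\<^sub>F h in at 0. - L \<le> (F (x + h) - F x) / h \<and> (F (x + h) - F x) / h \<le> L"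
      using lipschitz_slope_bound[OF lip, of x] unfolding abs_le_iff
      by (intro always_eventually allI) (metis minus_le_iff)
    show "False" if "p \<in> \<rat>" "q \<in> \<rat>" "p < q" "\<exists>\<^sub>F h in at 0. (F (x + h) - F x) / h < p"
      "\<exists>\<^sub>F h in at 0. (F (x + h) - F x) / h > q" for p q
      using oscillation_imp_rational_dini_gap[OF that] \<open>x \<notin> N\<close> by (auto simp: N_def I_def)
  qed simp
  then show "(F has_real_derivative deriv F x) (at x)"
    by (metis DERIV_def DERIV_imp_deriv)
qed

section \<open>Fundamental theorem of calculus for Lipschitz functions\<close>

lemma DERIV_difference_quotient_sequence:
  fixes f :: "real \<Rightarrow> real"
  assumes "(f has_real_derivative D) (at x)" "h \<longlonglongrightarrow> 0" "\<And>n. h n \<noteq> 0"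
  shows "(\<lambda>n. (f (x + h n) - f x) / h n) \<longlonglongrightarrow> D"
proof (rule filterlim_compose[of "\<lambda>k. (f (x + k) - f x) / k"])
  show "((\<lambda>k. (f (x + k) - f x) / k) \<longlongrightarrow> D) (at 0)" using assms(1) by (simp add: DERIV_def)
  show "filterlim h (at 0) sequentially" using assms(2,3) by (simp add: filterlim_at)
qed

lemma has_integral_difference_quotient:
  fixes \<Phi> f :: "real \<Rightarrow> real"
  assumes "\<And>t. t \<in> {a..b + h} \<Longrightarrow> (\<Phi> has_real_derivative f t) (at t)" "a \<le> b" "0 \<le> h"
  shows "((\<lambda>t. (f (t + h) - f t) / h) has_integral (\<Phi> (b + h) - \<Phi> b) / h - (\<Phi> (a + h) - \<Phi> a) / h) {a..b}"
proof -
  have "((\<lambda>t. (f (t + h) - f t) / h) has_integral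
      (\<lambda>t. (\<Phi> (t + h) - \<Phi> t) / h) b - (\<lambda>t. (\<Phi> (t + h) - \<Phi> t) / h) a) {a..b}"
  proof (rule fundamental_theorem_of_calculus[OF \<open>a \<le> b\<close>])
    fix t assume "t \<in> {a..b}"
    then have "((\<lambda>t. \<Phi> (t + h)) has_real_derivative f (t + h)) (at t)"
      and "(\<Phi> has_real_derivative f t) (at t)"
      using assms by (auto intro: DERIV_shift[THEN iffD1])
    then have "((\<lambda>t. (\<Phi> (t + h) - \<Phi> t) / h) has_real_derivative (f (t + h) - f t) / h) (at t)"
      by (intro DERIV_cdivide DERIV_diff)
    then show "((\<lambda>t. (\<Phi> (t + h) - \<Phi> t) / h) has_vector_derivative (f (t + h) - f t) / h) (at t within {a..b})"
      by (simp add: has_real_derivative_iff_has_vector_derivative has_vector_derivative_at_within)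
  qed
  then show ?thesis by simp
qed

lemma continuous_antiderivative_open_interval:
  fixes F :: "real \<Rightarrow> real"
  assumes "continuous_on {a..b} F"
  obtains \<Phi> where "\<And>t. t \<in> {a<..<b} \<Longrightarrow> (\<Phi> has_real_derivative F t) (at t)"
proof
  fix t :: real assume t: "t \<in> {a<..<b}"
  then have "((\<lambda>t. integral {a..t} F) has_real_derivative F t) (at t within {a..b})"
    using assms by (intro integral_has_real_derivative) auto
  then show "((\<lambda>t. integral {a..t} F) has_real_derivative F t) (at t)"
    using t by (simp add: at_within_Icc_at)
qed

lemma lipschitz_ae_differentiable_ftc:
  fixes F :: "real \<Rightarrow> real"
  assumes lip: "L-lipschitz_on UNIV F" and N: "negligible N"
    and diff: "\<And>x. x \<notin> N \<Longrightarrow> (F has_real_derivative deriv F x) (at x)" and "a \<le> b"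
  shows "(deriv F has_integral F b - F a) {a..b}" and "deriv F absolutely_integrable_on {a..b}"
proof -
  have cont: "continuous_on UNIV F" using lip by (rule lipschitz_on_continuous_on)
  (* The difference quotients g n of F are dominated by L and converge to deriv F off N;
     their integrals are difference quotients of an antiderivative \<Phi> of F. *)
  obtain \<Phi> where \<Phi>: "\<And>t. t \<in> {a - 1<..<b + 2} \<Longrightarrow> (\<Phi> has_real_derivative F t) (at t)"
    using continuous_antiderivative_open_interval[OF continuous_on_subset[OF cont subset_UNIV]] by blast
  define h where "h n = 1 / real (Suc n)" for n
  have h: "0 < h n" "h n \<le> 1" for n by (auto simp: h_def divide_le_eq)
  have "h \<longlonglongrightarrow> 0" unfolding h_def by (rule LIMSEQ_Suc[OF lim_const_over_n])
  define g where "g n t = (F (t + h n) - F t) / h n" for n t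
  define S where "S = {a..b} - N"
  have spike: "negligible {x \<in> {a..b} - S. f x \<noteq> 0}" "negligible {x \<in> S - {a..b}. f x \<noteq> 0}"
    for f :: "real \<Rightarrow> real" using N by (auto simp: S_def intro: negligible_subset[OF N])
  have g_int: "(g n has_integral (\<Phi> (b + h n) - \<Phi> b) / h n - (\<Phi> (a + h n) - \<Phi> a) / h n) {a..b}" for n
    unfolding g_def using h[of n] \<open>a \<le> b\<close> by (intro has_integral_difference_quotient \<Phi>) auto
  have lim_integrals: "(\<lambda>n. (\<Phi> (b + h n) - \<Phi> b) / h n - (\<Phi> (a + h n) - \<Phi> a) / h n) \<longlonglongrightarrow> F b - F a"
    using \<Phi> \<open>h \<longlonglongrightarrow> 0\<close> h(1) \<open>a \<le> b\<close>
    by (intro tendsto_diff DERIV_difference_quotient_sequence) (auto simp: less_le)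
  have g_int_S: "(g n has_integral (\<Phi> (b + h n) - \<Phi> b) / h n - (\<Phi> (a + h n) - \<Phi> a) / h n) S" for n
    using g_int[of n] has_integral_spike_set_eq[OF spike] by blast
  have L_int: "(\<lambda>_. L) integrable_on S" by (rule integrable_spike_set[OF integrable_const_ivl spike])
  moreover have "norm (g n x) \<le> L" for n x unfolding g_def using lipschitz_slope_bound[OF lip] by simp
  moreover have "(\<lambda>n. g n x) \<longlonglongrightarrow> deriv F x" if "x \<in> S" for x
    unfolding g_def using that h(1) \<open>h \<longlonglongrightarrow> 0\<close> diff[of x]
    by (intro DERIV_difference_quotient_sequence) (auto simp: S_def less_le)
  ultimately have integrable: "deriv F integrable_on S"
    and lim: "(\<lambda>n. integral S (g n)) \<longlonglongrightarrow> integral S (deriv F)"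
    using dominated_convergence[of g S "\<lambda>_. L" "deriv F"] g_int_S by blast+
  have "(\<lambda>n. integral S (g n)) = (\<lambda>n. (\<Phi> (b + h n) - \<Phi> b) / h n - (\<Phi> (a + h n) - \<Phi> a) / h n)"
    using g_int_S by (intro ext integral_unique)
  with lim lim_integrals have "integral S (deriv F) = F b - F a" by (metis LIMSEQ_unique)
  with integrable have "(deriv F has_integral F b - F a) S" using has_integral_integral by metis
  then show "(deriv F has_integral F b - F a) {a..b}" using has_integral_spike_set_eq[OF spike] by blast
  have "deriv F absolutely_integrable_on S"
    using integrable L_int lipschitz_deriv_bound[OF lip diff]
    by (intro absolutely_integrable_integrable_bound[where g = "\<lambda>_. L"]) (auto simp: S_def)
  then show "deriv F absolutely_integrable_on {a..b}" using absolutely_integrable_spike_set_eq[OF spike] by blast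
qed

lemma mono_lipschitz_on_ftc:
  fixes f :: "real \<Rightarrow> real"
  assumes mono: "mono_on {a..b} f" and lip: "L-lipschitz_on {a..b} f"
    and xy: "a \<le> x" "x \<le> y" "y \<le> b"
  shows "(deriv f has_integral f y - f x) {x..y}" and "deriv f absolutely_integrable_on {x..y}"
proof -
  define c where "c t = max a (min b t)" for t
  have c_ab: "c t \<in> {a..b}" for t using xy by (auto simp: c_def)
  define F where "F = f \<circ> c"
  have "mono F"
    using c_ab by (intro monoI) (auto simp: F_def c_def intro!: mono_onD[OF mono])
  moreover have "(L * 1)-lipschitz_on UNIV F"
    unfolding F_def
  proof (rule lipschitz_on_compose)
    show "1-lipschitz_on UNIV c" by (rule lipschitz_onI) (auto simp: c_def dist_real_def)
    show "L-lipschitz_on (c ` UNIV) f" using c_ab by (blast intro: lipschitz_on_subset[OF lip])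
  qed
  ultimately obtain N where N: "negligible N"
    and diff: "\<And>t. t \<notin> N \<Longrightarrow> (F has_real_derivative deriv F t) (at t)"
    by (rule mono_lipschitz_differentiable_ae) blast
  note ftc = lipschitz_ae_differentiable_ftc[OF \<open>(L * 1)-lipschitz_on UNIV F\<close> N diff \<open>x \<le> y\<close>]
  have deriv_eq: "deriv f t = deriv F t" if "t \<in> {x..y} - {a, b}" for t
  proof (rule deriv_cong_ev)
    have "\<forall>\<^sub>F s in nhds t. s \<in> {a<..<b}" using that xy by (intro eventually_nhds_in_open) auto
    then show "\<forall>\<^sub>F s in nhds t. f s = F s" by eventually_elim (simp add: F_def c_def)
  qed simp
  have "F x = f x" "F y = f y" using xy by (simp_all add: F_def c_def)
  then show "(deriv f has_integral f y - f x) {x..y}"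
    using has_integral_spike[where S = "{a, b}", OF _ deriv_eq ftc(1)] by simp
  show "deriv f absolutely_integrable_on {x..y}"
    using absolutely_integrable_spike[where S = "{a, b}", OF ftc(2) _ deriv_eq] by simp
qed

section \<open>Slices of copulas and the bounds\<close>

lemma copula2_transp2:
  assumes "copula2 C"
  shows "copula2 (transp2 C)"
proof -
  have rect: "C u2 v2 - C u2 v1 - C u1 v2 + C u1 v1 \<ge> 0"
    if "u1 \<in> {0..1}" "u2 \<in> {0..1}" "v1 \<in> {0..1}" "v2 \<in> {0..1}" "u1 \<le> u2" "v1 \<le> v2"
    for u1 u2 v1 v2 using assms that unfolding copula2_def by blast
  have "C v2 u2 - C v1 u2 - C v2 u1 + C v1 u1 \<ge> 0"
    if "u1 \<in> {0..1}" "u2 \<in> {0..1}" "v1 \<in> {0..1}" "v2 \<in> {0..1}" "u1 \<le> u2" "v1 \<le> v2"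
    for u1 u2 v1 v2 using rect[of v1 v2 u1 u2] that by linarith
  with assms show ?thesis unfolding copula2_def transp2_def by simp
qed

lemma copula2_slice:
  assumes C: "copula2 C" and u: "u \<in> {0..1}"
  shows "mono_on {0..1} (C u)" and "1-lipschitz_on {0..1} (C u)"
proof -
  have increments: "C u x \<le> C u y \<and> C u y - C u x \<le> y - x"
    if "x \<in> {0..1}" "y \<in> {0..1}" "x \<le> y" for x y
  proof -
    have rect: "C u2 v2 - C u2 v1 - C u1 v2 + C u1 v1 \<ge> 0"
      if "u1 \<in> {0..1}" "u2 \<in> {0..1}" "v1 \<in> {0..1}" "v2 \<in> {0..1}" "u1 \<le> u2" "v1 \<le> v2"
      for u1 u2 v1 v2 using C that unfolding copula2_def by blast
    have "C u y - C u x - C 0 y + C 0 x \<ge> 0" "C 1 y - C 1 x - C u y + C u x \<ge> 0"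
      using rect[of 0 u x y] rect[of u 1 x y] u that by auto
    moreover have "C 0 x = 0" "C 0 y = 0" "C 1 x = x" "C 1 y = y"
      using C that unfolding copula2_def by auto
    ultimately show ?thesis by linarith
  qed
  then show "mono_on {0..1} (C u)" by (intro mono_onI) auto
  show "1-lipschitz_on {0..1} (C u)"
  proof (rule lipschitz_onI)
    fix x y :: real assume "x \<in> {0..1}" "y \<in> {0..1}"
    then show "dist (C u x) (C u y) \<le> 1 * dist x y"
      using increments[of x y] increments[of y x] by (cases "x \<le> y") (auto simp: dist_real_def)
  qed simp
qed

lemma integral_W2_bounds:
  fixes f g :: "real \<Rightarrow> real"
  assumes f: "f absolutely_integrable_on {c..d}" and g: "g absolutely_integrable_on {c..d}" and "c \<le> d"
  shows "(\<lambda>t. W2 (f t) (g t)) integrable_on {c..d}"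
    and "integral {c..d} f + integral {c..d} g - (d - c) \<le> integral {c..d} (\<lambda>t. W2 (f t) (g t))"
    and "0 \<le> integral {c..d} (\<lambda>t. W2 (f t) (g t))"
proof -
  have const: "(\<lambda>t. k) absolutely_integrable_on {c..d}" for k :: real by simp
  have "(\<lambda>t. f t + g t - 1) absolutely_integrable_on {c..d}"
    using f g const by (intro set_integral_diff set_integral_add)
  then have "(\<lambda>t. max (f t + g t - 1) 0) absolutely_integrable_on {c..d}"
    using const by (rule absolutely_integrable_max_1)
  then show W: "(\<lambda>t. W2 (f t) (g t)) integrable_on {c..d}"
    by (simp add: W2_def absolutely_integrable_on_def)
  have "((\<lambda>t. 1::real) has_integral d - c) {c..d}"
    using has_integral_const_real[of "1::real" c d] \<open>c \<le> d\<close> by simp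
  then have lin: "((\<lambda>t. f t + g t - 1) has_integral integral {c..d} f + integral {c..d} g - (d - c)) {c..d}"
    using f g by (intro has_integral_diff has_integral_add integrable_integral)
      (auto simp: absolutely_integrable_on_def)
  have "integral {c..d} (\<lambda>t. f t + g t - 1) \<le> integral {c..d} (\<lambda>t. W2 (f t) (g t))"
    by (rule integral_le[OF has_integral_integrable[OF lin] W]) (simp add: W2_def)
  then show "integral {c..d} f + integral {c..d} g - (d - c) \<le> integral {c..d} (\<lambda>t. W2 (f t) (g t))"
    using integral_unique[OF lin] by simp
  show "0 \<le> integral {c..d} (\<lambda>t. W2 (f t) (g t))"
    using W by (rule integral_nonneg) (simp add: W2_def)
qed

lemma integral_M2_bounds:
  fixes f g :: "real \<Rightarrow> real"
  assumes f: "f absolutely_integrable_on {c..d}" and g: "g absolutely_integrable_on {c..d}"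
  shows "integral {c..d} (\<lambda>t. M2 (f t) (g t)) \<le> integral {c..d} f"
    and "integral {c..d} (\<lambda>t. M2 (f t) (g t)) \<le> integral {c..d} g"
proof -
  have M: "(\<lambda>t. M2 (f t) (g t)) integrable_on {c..d}"
    using absolutely_integrable_min_1[OF f g] by (simp add: M2_def absolutely_integrable_on_def)
  show "integral {c..d} (\<lambda>t. M2 (f t) (g t)) \<le> integral {c..d} f"
    using f by (intro integral_le[OF M]) (auto simp: M2_def absolutely_integrable_on_def)
  show "integral {c..d} (\<lambda>t. M2 (f t) (g t)) \<le> integral {c..d} g"
    using g by (intro integral_le[OF M]) (auto simp: M2_def absolutely_integrable_on_def)
qed

lemma star3_ast2_bounds:
  assumes A: "copula2 A" and B: "copula2 B"
    and x: "x \<in> {0..1}" and y: "y \<in> {0..1}" and z: "z \<in> {0..1}"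
  shows "A x y + B y z - y \<le> star3 W2 A B x y z"
    and "0 \<le> star3 W2 A B x y z"
    and "star3 M2 A B x y z \<le> A x y"
    and "star3 M2 A B x y z \<le> B y z"
    and "(x - A x y) + (z - B y z) - (1 - y) \<le> ast2 W2 A B x z - star3 W2 A B x y z"
proof -
  let ?a = "deriv (A x)" and ?b = "deriv (\<lambda>s. B s z)"
  have slices: "mono_on {0..1} (A x)" "1-lipschitz_on {0..1} (A x)"
    "mono_on {0..1} (\<lambda>s. B s z)" "1-lipschitz_on {0..1} (\<lambda>s. B s z)"
    using copula2_slice[OF A x] copula2_slice[OF copula2_transp2[OF B] z]
    by (simp_all add: transp2_def[abs_def])
  have ends: "A x 0 = 0" "A x 1 = x" "B 0 z = 0" "B 1 z = z"
    using A B x z by (simp_all add: copula2_def)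
  have a: "integral {s..t} ?a = A x t - A x s" "?a absolutely_integrable_on {s..t}"
    and b: "integral {s..t} ?b = B t z - B s z" "?b absolutely_integrable_on {s..t}"
    if "0 \<le> s" "s \<le> t" "t \<le> 1" for s t
    using mono_lipschitz_on_ftc[OF slices(1,2) that] mono_lipschitz_on_ftc[OF slices(3,4) that]
    by (auto intro: integral_unique)
  have y01: "0 \<le> y" "y \<le> 1" using y by auto
  note W_0y = integral_W2_bounds[OF a(2) b(2), of 0 y] and W_y1 = integral_W2_bounds[OF a(2) b(2), of y 1]
  note M_0y = integral_M2_bounds[OF a(2) b(2), of 0 y]
  have "ast2 W2 A B x z = star3 W2 A B x y z + integral {y..1} (\<lambda>t. W2 (?a t) (?b t))"
    unfolding ast2_def star3_def using integral_W2_bounds(1)[OF a(2) b(2), of 0 1] y01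
    by (simp add: Henstock_Kurzweil_Integration.integral_combine)
  then show "(x - A x y) + (z - B y z) - (1 - y) \<le> ast2 W2 A B x z - star3 W2 A B x y z"
    using W_y1(2) y01 a(1)[of y 1] b(1)[of y 1] ends by simp
  show "A x y + B y z - y \<le> star3 W2 A B x y z" "0 \<le> star3 W2 A B x y z"
    using W_0y(2,3) y01 a(1)[of 0 y] b(1)[of 0 y] ends by (simp_all add: star3_def)
  show "star3 M2 A B x y z \<le> A x y" "star3 M2 A B x y z \<le> B y z"
    using M_0y y01 a(1)[of 0 y] b(1)[of 0 y] ends by (simp_all add: star3_def)
qed

theorem proposition5p1:
  fixes C12 C13 C23 :: "real \<Rightarrow> real \<Rightarrow> real" and u1 u2 u3 :: real
  assumes "copula2 C12" and "copula2 C13" and "copula2 C23"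
    and "compatible C12 C13 C23"
    and "u1 \<in> {0..1}" and "u2 \<in> {0..1}" and "u3 \<in> {0..1}"
  shows "CL C12 C13 C23 u1 u2 u3 \<ge> FL C12 C13 C23 u1 u2 u3
       \<and> CU C12 C13 C23 u1 u2 u3 \<le> FU C12 C13 C23 u1 u2 u3"
proof -
  note C = assms(1-3) and u = assms(5-7)
  note b123 = star3_ast2_bounds[OF C(1) C(3) u(1) u(2) u(3)]
    and b132 = star3_ast2_bounds[OF C(2) copula2_transp2[OF C(3)] u(1) u(3) u(2)]
    and b213 = star3_ast2_bounds[OF copula2_transp2[OF C(1)] C(2) u(2) u(1) u(3)]
  have transposed: "transp2 C12 u2 u1 = C12 u1 u2" "transp2 C23 u3 u2 = C23 u2 u3"
    by (simp_all add: transp2_def)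
  let ?CL = "CL C12 C13 C23 u1 u2 u3" and ?CU = "CU C12 C13 C23 u1 u2 u3"
  have CL: "star3 W2 C12 C23 u1 u2 u3 \<le> ?CL" "star3 W2 C13 (transp2 C23) u1 u3 u2 \<le> ?CL"
    "star3 W2 (transp2 C12) C13 u2 u1 u3 \<le> ?CL"
    by (simp_all add: CL_def termL_def)
  have CU: "?CU \<le> star3 M2 C12 C23 u1 u2 u3" "?CU \<le> star3 M2 C13 (transp2 C23) u1 u3 u2"
    "?CU \<le> star3 W2 C12 C23 u1 u2 u3 + C13 u1 u3 - ast2 W2 C12 C23 u1 u3"
    by (simp_all add: CU_def termU_def)
  have "FL C12 C13 C23 u1 u2 u3 \<le> ?CL"
    unfolding FL_def by (intro max.boundedI; use b123 b132 b213 transposed CL in linarith)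
  moreover have "?CU \<le> FU C12 C13 C23 u1 u2 u3"
    unfolding FU_def by (intro min.boundedI; use b123 b132 transposed CU in linarith)
  ultimately show ?thesis by simp
qed

end
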